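(* If a finite connected interval graph $G$ is balanced and $p$-critical (for some $p\ge1$), then $G$ has exactly one basepoint.
   Context: An interval graph is a finite simple graph whose vertices can be assigned (closed, bounded) real intervals $I_v$ so that $v,w$ are adjacent iff $I_v\cap I_w\ne\emptyset$. For such a representation $\alpha$, $\mathrm{imp}_\alpha(z)$ is the number of intervals $I_w$, $w\ne z$, with $I_w\subseteq I_z$; $\mathrm{imp}(\alpha)=\max_z\mathrm{imp}_\alpha(z)$; and the impropriety $\mathrm{imp}(G)$ is the minimum of $\mathrm{imp}(\alpha)$ over all representations. A local component at $z$ is a connected component of $G\setminus\{z\}$; it is exterior iff it contains a vertex not adjacent to $z$. If $z$ has $n$ local components, $\mathrm{wt}(z)$ is the sum of the $n-2$ smallest orders among the non-exterior local components at $z$ ($0$ if $n\le2$), and $\mathrm{wt}(G)=\max_z \mathrm{wt}(z)$. $G$ is balanced iff $\mathrm{wt}(G)=\mathrm{imp}(G)$. If $G$ is balanced, a basepoint of $G$ is a vertex $z$ with $\mathrm{wt}(z)=\mathrm{imp}(G)$. For $p>0$, $G$ is $p$-critical iff $\mathrm{imp}(G)=p$ and every proper induced subgraph of $G$ has impropriety strictly less than $p$. *)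

theory Defs
  imports Complex_Main "HOL-Library.Multiset"
begin

text \<open>A finite simple graph is given by a vertex set V and a symmetric irreflexive
adjacency relation E (only its restriction to V matters). Induced subgraphs are
obtained by shrinking V.\<close>

definition simple_graph :: "'a set \<Rightarrow> ('a \<Rightarrow> 'a \<Rightarrow> bool) \<Rightarrow> bool" where
  "simple_graph V E \<longleftrightarrow> finite V \<and> (\<forall>x y. E x y \<longleftrightarrow> E y x) \<and> (\<forall>x. \<not> E x x)"

definition interval_rep :: "'a set \<Rightarrow> ('a \<Rightarrow> 'a \<Rightarrow> bool) \<Rightarrow> ('a \<Rightarrow> real \<times> real) \<Rightarrow> bool" where
  "interval_rep V E I \<longleftrightarrow>
     (\<forall>v\<in>V. fst (I v) \<le> snd (I v)) \<and>
     (\<forall>v\<in>V. \<forall>w\<in>V. v \<noteq> w \<longrightarrow>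
        (E v w \<longleftrightarrow> {fst (I v)..snd (I v)} \<inter> {fst (I w)..snd (I w)} \<noteq> {}))"

definition interval_graph :: "'a set \<Rightarrow> ('a \<Rightarrow> 'a \<Rightarrow> bool) \<Rightarrow> bool" where
  "interval_graph V E \<longleftrightarrow> simple_graph V E \<and> (\<exists>I. interval_rep V E I)"

definition imp_at :: "'a set \<Rightarrow> ('a \<Rightarrow> real \<times> real) \<Rightarrow> 'a \<Rightarrow> nat" where
  "imp_at V I z = card {w \<in> V. w \<noteq> z \<and> {fst (I w)..snd (I w)} \<subseteq> {fst (I z)..snd (I z)}}"

definition imp_rep :: "'a set \<Rightarrow> ('a \<Rightarrow> real \<times> real) \<Rightarrow> nat" where
  "imp_rep V I = Max (insert 0 (imp_at V I ` V))"

definition impropriety :: "'a set \<Rightarrow> ('a \<Rightarrow> 'a \<Rightarrow> bool) \<Rightarrow> nat" where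
  "impropriety V E = (LEAST k. \<exists>I. interval_rep V E I \<and> imp_rep V I = k)"

definition reach :: "'a set \<Rightarrow> ('a \<Rightarrow> 'a \<Rightarrow> bool) \<Rightarrow> 'a \<Rightarrow> 'a \<Rightarrow> bool" where
  "reach W E = (\<lambda>a b. a \<in> W \<and> b \<in> W \<and> E a b)\<^sup>*\<^sup>*"

definition components :: "'a set \<Rightarrow> ('a \<Rightarrow> 'a \<Rightarrow> bool) \<Rightarrow> 'a set set" where
  "components W E = {{y \<in> W. reach W E x y} | x. x \<in> W}"

definition connected_graph :: "'a set \<Rightarrow> ('a \<Rightarrow> 'a \<Rightarrow> bool) \<Rightarrow> bool" where
  "connected_graph V E \<longleftrightarrow> V \<noteq> {} \<and> (\<forall>x\<in>V. \<forall>y\<in>V. reach V E x y)"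

definition local_components :: "'a set \<Rightarrow> ('a \<Rightarrow> 'a \<Rightarrow> bool) \<Rightarrow> 'a \<Rightarrow> 'a set set" where
  "local_components V E z = components (V - {z}) E"

definition exterior :: "('a \<Rightarrow> 'a \<Rightarrow> bool) \<Rightarrow> 'a \<Rightarrow> 'a set \<Rightarrow> bool" where
  "exterior E z C \<longleftrightarrow> (\<exists>v\<in>C. \<not> E z v)"

definition wt_at :: "'a set \<Rightarrow> ('a \<Rightarrow> 'a \<Rightarrow> bool) \<Rightarrow> 'a \<Rightarrow> nat" where
  "wt_at V E z =
     (let LC = local_components V E z;
          n = card LC;
          orders = sorted_list_of_multiset
                     (image_mset card (mset_set {C \<in> LC. \<not> exterior E z C}))
      in sum_list (take (n - 2) orders))"

definition wt :: "'a set \<Rightarrow> ('a \<Rightarrow> 'a \<Rightarrow> bool) \<Rightarrow> nat" where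
  "wt V E = Max (insert 0 (wt_at V E ` V))"

definition balanced :: "'a set \<Rightarrow> ('a \<Rightarrow> 'a \<Rightarrow> bool) \<Rightarrow> bool" where
  "balanced V E \<longleftrightarrow> wt V E = impropriety V E"

definition basepoint :: "'a set \<Rightarrow> ('a \<Rightarrow> 'a \<Rightarrow> bool) \<Rightarrow> 'a \<Rightarrow> bool" where
  "basepoint V E z \<longleftrightarrow> balanced V E \<and> z \<in> V \<and> wt_at V E z = impropriety V E"

definition critical :: "nat \<Rightarrow> 'a set \<Rightarrow> ('a \<Rightarrow> 'a \<Rightarrow> bool) \<Rightarrow> bool" where
  "critical p V E \<longleftrightarrow> 0 < p \<and> impropriety V E = p \<and>
     (\<forall>V'. V' \<subset> V \<longrightarrow> impropriety V' E < p)"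

end

theory Submission
  imports Defs
begin

(* In a connected interval graph the weight of any vertex z is bounded by the
   impropriety (Lemma wt_at_le_impropriety): in any representation, every local component at z
   is adjacent to z, and at most one of them reaches past the left endpoint of I_z and at most
   one past the right endpoint (such a component contains an interval covering that endpoint,
   and intervals covering a common point are pairwise adjacent).
   Hence all but at most two local components have all their intervals nested inside I_z; these
   are non-exterior, so the n-2 smallest non-exterior orders sum to at most imp(z).

   Uniqueness of the basepoint: if z2 is a basepoint and some other vertex z1 has positive
   weight, then z1 has at least three local components, so two of them, A and B, avoid z2.
   Deleting A leaves a connected proper induced subgraph H in which the local components at
   z2 are those of G, except that the one containing z1 loses A; it stays exterior because it
   still contains B, which is not adjacent to z2.  So wt_H(z2) = wt_G(z2) = p, while
   imp(H) < p by criticality, contradicting the bound above.  Existence is immediate since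
   wt(G) = p > 0 is attained. *)


lemma sum_take_sorted_le:
  fixes s :: "nat list"
  assumes "sorted s" "N \<subseteq># mset s" "k \<le> size N"
  shows "sum_list (take k s) \<le> sum_mset N"
  using assms
proof (induction s arbitrary: N k)
  case Nil
  then show ?case by simp
next
  case (Cons x s)
  show ?case
  proof (cases k)
    case 0
    then show ?thesis by simp
  next
    case (Suc k')
    then obtain y where y: "y \<in># N" "x \<le> y" "N - {#y#} \<subseteq># mset s"
    proof (cases "x \<in># N")
      case True
      have "N - {#x#} \<subseteq># mset s"
        using Cons.prems(2) True by (simp add: subset_eq_diff_conv add.commute)
      with True show ?thesis using that by blast
    next
      case False
      from Suc Cons.prems(3) obtain y where "y \<in># N" by (cases N) auto
      have Ns: "N \<subseteq># mset s"
        using Cons.prems(2) False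
        by (metis diff_single_trivial subset_eq_diff_conv add_mset_add_single add.commute mset.simps(2))
      then have "y \<in> set s" using \<open>y \<in># N\<close> mset_subset_eqD by fastforce
      then have "x \<le> y" using Cons.prems(1) by simp
      moreover have "N - {#y#} \<subseteq># mset s"
        using Ns by (rule subset_mset.order_trans[OF diff_subset_eq_self])
      ultimately show ?thesis using that \<open>y \<in># N\<close> by blast
    qed
    have "k' \<le> size (N - {#y#})" using Cons.prems(3) Suc y(1) by (simp add: size_Diff_singleton)
    then have "sum_list (take k' s) \<le> sum_mset (N - {#y#})"
      using Cons.IH[OF _ y(3)] Cons.prems(1) by simp
    moreover have "sum_mset N = y + sum_mset (N - {#y#})" using y(1) by (rule sum_mset.remove)
    ultimately show ?thesis using Suc y(2) by simp
  qed
qed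


lemma reach_refl: "reach W E a a"
  unfolding reach_def by simp

lemma reach_edge: "a \<in> W \<Longrightarrow> b \<in> W \<Longrightarrow> E a b \<Longrightarrow> reach W E a b"
  unfolding reach_def by (rule r_into_rtranclp) simp

lemma reach_trans: "reach W E a b \<Longrightarrow> reach W E b c \<Longrightarrow> reach W E a c"
  unfolding reach_def by (rule rtranclp_trans)

lemma reach_sym:
  assumes "symp E" and "reach W E x y"
  shows "reach W E y x"
  using assms(2) unfolding reach_def
proof (induction rule: rtranclp_induct)
  case base
  then show ?case by simp
next
  case (step y z)
  then have "E z y" using assms(1) by (blast dest: sympD)
  then show ?case using step by (auto intro: converse_rtranclp_into_rtranclp)
qed

lemma reach_mono: "W \<subseteq> W' \<Longrightarrow> reach W E x y \<Longrightarrow> reach W' E x y"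
  unfolding reach_def by (rule rtranclp_mono[THEN predicate2D]) auto

lemma reach_first_hit:
  assumes "reach W E x z" "x \<noteq> z"
  shows "\<exists>y. reach (W - {z}) E x y \<and> E y z \<and> y \<in> W - {z}"
  using assms unfolding reach_def
proof (induction rule: converse_rtranclp_induct)
  case base
  then show ?case by simp
next
  case (step x x')
  then have xW: "x \<in> W" "x' \<in> W" "E x x'" by auto
  show ?case
  proof (cases "x' = z")
    case True
    then show ?thesis using xW step.prems by (intro exI[of _ x]) auto
  next
    case False
    then obtain y where y: "(\<lambda>a b. a \<in> W - {z} \<and> b \<in> W - {z} \<and> E a b)\<^sup>*\<^sup>* x' y"
      "E y z" "y \<in> W - {z}" using step.IH by blast
    have "(\<lambda>a b. a \<in> W - {z} \<and> b \<in> W - {z} \<and> E a b) x x'"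
      using xW False step.prems by auto
    with y show ?thesis by (blast intro: converse_rtranclp_into_rtranclp)
  qed
qed


definition component_of :: "'a set \<Rightarrow> ('a \<Rightarrow> 'a \<Rightarrow> bool) \<Rightarrow> 'a \<Rightarrow> 'a set" where
  "component_of W E x = {y \<in> W. reach W E x y}"

lemma components_eq_image: "components W E = component_of W E ` W"
  unfolding components_def component_of_def by auto

lemma component_of_self: "x \<in> W \<Longrightarrow> x \<in> component_of W E x"
  unfolding component_of_def by (simp add: reach_refl)

lemma component_of_subset: "component_of W E x \<subseteq> W"
  unfolding component_of_def by auto

lemma component_of_mono: "W \<subseteq> W' \<Longrightarrow> component_of W E x \<subseteq> component_of W' E x"
  unfolding component_of_def using reach_mono by fastforce

lemma component_of_eq:
  assumes "symp E" and "y \<in> component_of W E x"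
  shows "component_of W E y = component_of W E x"
proof -
  have xy: "reach W E x y" using assms(2) unfolding component_of_def by simp
  have yx: "reach W E y x" using reach_sym[OF assms(1) xy] .
  show ?thesis
    unfolding component_of_def using reach_trans[OF xy] reach_trans[OF yx] by blast
qed

lemma component_edge_closed:
  assumes "y \<in> component_of W E x" "z \<in> W" "E y z"
  shows "z \<in> component_of W E x"
proof -
  have xy: "reach W E x y" and y: "y \<in> W" using assms(1) unfolding component_of_def by auto
  have "reach W E x z" using reach_trans[OF xy reach_edge[of y W z E, OF y assms(2,3)]] .
  then show ?thesis using assms(2) unfolding component_of_def by simp
qed

lemma reach_inside_component:
  assumes "reach W E x y"
  shows "reach (component_of W E x) E x y"
  using assms unfolding reach_def
proof (induction rule: rtranclp_induct)
  case base
  then show ?case by simp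
next
  case (step y z)
  have yz: "y \<in> W" "z \<in> W" "E y z" using step(2) by auto
  have y: "y \<in> component_of W E x" using step(1) yz(1) unfolding component_of_def reach_def by simp
  have z: "z \<in> component_of W E x" using component_edge_closed[OF y yz(2,3)] .
  show ?case using step(3) reach_edge[of y "component_of W E x" z E, OF y z yz(3)]
    unfolding reach_def by (rule rtranclp_trans)
qed

lemma components_subset: "K \<in> components W E \<Longrightarrow> K \<subseteq> W"
  unfolding components_eq_image using component_of_subset[of W E] by blast

lemma components_nonempty: "K \<in> components W E \<Longrightarrow> K \<noteq> {}"
  unfolding components_eq_image using component_of_self[of _ W E] by blast

lemma component_eq_of_mem:
  assumes "symp E" "K \<in> components W E" "y \<in> K"
  shows "K = component_of W E y"
proof -
  obtain x where "K = component_of W E x" using assms(2) unfolding components_eq_image by blast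
  then show ?thesis using component_of_eq[OF assms(1), of y W x] assms(3) by simp
qed

lemma components_eqI:
  assumes "symp E" "K1 \<in> components W E" "K2 \<in> components W E" "t \<in> K1" "t \<in> K2"
  shows "K1 = K2"
  using component_eq_of_mem[OF assms(1,2,4)] component_eq_of_mem[OF assms(1,3,5)] by simp

lemma component_has_neighbour:
  assumes "symp E" and "\<forall>v\<in>W. reach W E v z" and "K \<in> components (W - {z}) E"
  shows "\<exists>v\<in>K. E z v"
proof -
  obtain x where x: "x \<in> W - {z}" "K = component_of (W - {z}) E x"
    using assms(3) unfolding components_eq_image by blast
  obtain y where y: "reach (W - {z}) E x y" "E y z" "y \<in> W - {z}"
    using reach_first_hit[of W E x z] assms(2) x(1) by blast
  have "y \<in> K" using x(2) y unfolding component_of_def by simp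
  moreover have "E z y" using assms(1) y(2) by (blast dest: sympD)
  ultimately show ?thesis by blast
qed

lemma component_subset_of_neighbour:
  assumes sym: "symp E" and K: "K \<in> components U E" "K \<subseteq> W"
    and z: "z \<in> W" and u: "u \<in> K" "E u z"
  shows "K \<subseteq> component_of W E z"
proof
  fix a assume a: "a \<in> K"
  have "u \<in> component_of U E a" using component_eq_of_mem[OF sym K(1) a] u(1) by simp
  then have "reach U E a u" unfolding component_of_def by simp
  then have "reach K E a u"
    using reach_inside_component component_eq_of_mem[OF sym K(1) a] by metis
  then have "reach W E a z" using reach_mono[OF K(2)] reach_edge[of u W z E] u K(2) z
    by (blast intro: reach_trans)
  then show "a \<in> component_of W E z"
    using reach_sym[OF sym] a K(2) unfolding component_of_def by blast
qed

lemma component_of_diff_disjoint: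
  assumes "component_of W E x \<inter> A = {}"
  shows "component_of (W - A) E x = component_of W E x"
proof
  show "component_of (W - A) E x \<subseteq> component_of W E x"
    by (rule component_of_mono) blast
  show "component_of W E x \<subseteq> component_of (W - A) E x"
  proof
    fix y assume y: "y \<in> component_of W E x"
    have "reach W E x y" using y unfolding component_of_def by simp
    then have "reach (component_of W E x) E x y" by (rule reach_inside_component)
    moreover have sub: "component_of W E x \<subseteq> W - A"
      using assms component_of_subset[of W E x] by blast
    ultimately have "reach (W - A) E x y" by (rule reach_mono[rotated])
    then show "y \<in> component_of (W - A) E x" using y sub unfolding component_of_def by blast
  qed
qed

lemma component_delete_vertex:
  assumes "K \<in> components W E" "x \<notin> K"
  shows "K \<in> components (W - {x}) E"
proof -
  obtain k where k: "k \<in> W" "K = component_of W E k"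
    using assms(1) unfolding components_eq_image by blast
  then have "K = component_of (W - {x}) E k"
    using component_of_diff_disjoint[of W E k "{x}"] assms(2) by auto
  moreover have "k \<in> W - {x}" using k component_of_self[of k W E] assms(2) by blast
  ultimately show ?thesis unfolding components_eq_image by blast
qed

lemma reach_avoiding_component:
  assumes sym: "symp E" and z: "z \<in> W" and A: "A \<in> components (W - {z}) E"
    and y: "y \<in> W - A" and r: "reach W E y z"
  shows "reach (W - A) E y z"
proof (cases "y = z")
  case True
  then show ?thesis by (simp add: reach_refl)
next
  case False
  obtain w where w: "reach (W - {z}) E y w" "E w z" "w \<in> W - {z}"
    using reach_first_hit[OF r False] by blast
  define K where "K = component_of (W - {z}) E y"
  have yW: "y \<in> W - {z}" using y False by blast
  have yK: "y \<in> K" unfolding K_def using component_of_self[OF yW] .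
  have "K \<in> components (W - {z}) E" unfolding K_def components_eq_image using yW by blast
  then have KA: "K \<inter> A = {}" using components_eqI[OF sym _ A] yK y by blast
  have KW: "K \<subseteq> W - A" using KA component_of_subset[of "W - {z}" E y] unfolding K_def by blast
  have wK: "w \<in> K" using w unfolding K_def component_of_def by simp
  have "reach K E y w" unfolding K_def using w(1) by (rule reach_inside_component)
  then have yw: "reach (W - A) E y w" by (rule reach_mono[OF KW])
  have "z \<notin> A" using components_subset[OF A] by blast
  then have "reach (W - A) E w z" using reach_edge[of w "W - A" z E] wK KW w(2) z by blast
  then show ?thesis using reach_trans[OF yw] by blast
qed

lemma components_diff_part:
  assumes sym: "symp E" and C: "C \<in> components W E" "A \<subseteq> C"
    and c: "c \<in> C - A" and conn: "C - A \<subseteq> component_of (W - A) E c"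
  shows "components (W - A) E = insert (C - A) (components W E - {C})"
    and "C - A \<notin> components W E - {C}"
proof -
  have Cc: "C = component_of W E c" using component_eq_of_mem[OF sym C(1)] c by blast
  have CA: "component_of (W - A) E c = C - A"
    using conn component_of_mono[of "W - A" W E c] component_of_subset[of "W - A" E c]
    unfolding Cc by blast
  have other: "component_of (W - A) E x = component_of W E x" if x: "x \<in> W - C" for x
  proof (rule component_of_diff_disjoint)
    have "x \<in> component_of W E x" using x component_of_self[of x W E] by blast
    then have "component_of W E x \<noteq> C" using x by blast
    moreover have "component_of W E x \<in> components W E" using x unfolding components_eq_image by blast
    ultimately have "component_of W E x \<inter> C = {}" using components_eqI[OF sym _ C(1)] by blast
    then show "component_of W E x \<inter> A = {}" using C(2) by blast
  qed
  have CW: "C \<subseteq> W" using components_subset[OF C(1)] .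
  show "components (W - A) E = insert (C - A) (components W E - {C})"
  proof
    show "components (W - A) E \<subseteq> insert (C - A) (components W E - {C})"
    proof
      fix K assume "K \<in> components (W - A) E"
      then obtain x where x: "x \<in> W - A" "K = component_of (W - A) E x"
        unfolding components_eq_image by blast
      show "K \<in> insert (C - A) (components W E - {C})"
      proof (cases "x \<in> C")
        case True
        then have "x \<in> component_of (W - A) E c" using conn x(1) by blast
        then have "K = C - A" using x(2) CA component_of_eq[OF sym, of x "W - A" c] by simp
        then show ?thesis by simp
      next
        case False
        have "x \<in> component_of W E x" using x component_of_self[of x W E] by blast
        then have "K \<noteq> C" "K = component_of W E x" using False x other[of x] by auto
        then show ?thesis using x unfolding components_eq_image by blast
      qed
    qed
    show "insert (C - A) (components W E - {C}) \<subseteq> components (W - A) E"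
    proof
      fix K assume K: "K \<in> insert (C - A) (components W E - {C})"
      show "K \<in> components (W - A) E"
      proof (cases "K = C - A")
        case True
        then show ?thesis using CA c CW unfolding components_eq_image by blast
      next
        case False
        then obtain x where x: "x \<in> W" "K = component_of W E x" "K \<noteq> C"
          using K unfolding components_eq_image by blast
        have "x \<notin> C"
          using x component_eq_of_mem[OF sym C(1), of x] by blast
        then have "K = component_of (W - A) E x" using other x by blast
        then show ?thesis using x \<open>x \<notin> C\<close> C(2) unfolding components_eq_image by blast
      qed
    qed
  qed
  show "C - A \<notin> components W E - {C}"
    using components_eqI[OF sym _ C(1), of "C - A" c] c by blast
qed


definition ival :: "('a \<Rightarrow> real \<times> real) \<Rightarrow> 'a \<Rightarrow> real set" where
  "ival I v = {fst (I v)..snd (I v)}"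

lemma rep_adj:
  assumes "interval_rep W E I" "v \<in> W" "w \<in> W" "v \<noteq> w"
  shows "E v w \<longleftrightarrow> ival I v \<inter> ival I w \<noteq> {}"
  using assms unfolding interval_rep_def ival_def by blast

lemma rep_fst_le_snd: "interval_rep W E I \<Longrightarrow> v \<in> W \<Longrightarrow> fst (I v) \<le> snd (I v)"
  unfolding interval_rep_def by blast

lemma rep_restrict: "interval_rep V E I \<Longrightarrow> W \<subseteq> V \<Longrightarrow> interval_rep W E I"
  unfolding interval_rep_def by blast

lemma reach_covers_point:
  assumes rep: "interval_rep W E I" and v: "v \<in> W" and r: "reach W E v u"
    and a: "fst (I v) \<le> a" "a \<le> snd (I u)"
  shows "\<exists>w\<in>component_of W E v. a \<in> ival I w"
proof -
  have "(\<exists>w\<in>component_of W E v. a \<in> ival I w) \<or> snd (I u) < a"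
    using r unfolding reach_def
  proof (induction rule: rtranclp_induct)
    case base
    then show ?case using a(1) component_of_self[OF v] unfolding ival_def by force
  next
    case (step y y')
    have yy': "y \<in> W" "y' \<in> W" "E y y'" using step(2) by auto
    have ry': "y' \<in> component_of W E v"
      using step(1,2) unfolding component_of_def reach_def
      by (simp add: rtranclp.rtrancl_into_rtrancl)
    show ?case
    proof (cases "\<exists>w\<in>component_of W E v. a \<in> ival I w")
      case False
      then have ya: "snd (I y) < a" using step(3) by blast
      have "fst (I y') \<le> snd (I y)"
      proof (cases "y = y'")
        case True
        then show ?thesis using rep_fst_le_snd[OF rep yy'(1)] by simp
      next
        case False
        then show ?thesis using rep_adj[OF rep yy'(1,2) False] yy'(3) unfolding ival_def by auto
      qed
      then show ?thesis using ya ry' unfolding ival_def by force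
    qed blast
  qed
  then show ?thesis using a(2) by simp
qed

text \<open>Intervals sharing a point form a clique, so at most one component of W contains an
  interval covering a given point.\<close>

lemma component_covering_point_unique:
  assumes sym: "symp E" and rep: "interval_rep W E I"
    and K: "K1 \<in> components W E" "K2 \<in> components W E"
    and w: "w1 \<in> K1" "w2 \<in> K2" "a \<in> ival I w1" "a \<in> ival I w2"
  shows "K1 = K2"
proof (cases "w1 = w2")
  case True
  then show ?thesis using components_eqI[OF sym K] w by blast
next
  case False
  have W: "w1 \<in> W" "w2 \<in> W" using K w components_subset by blast+
  then have "E w1 w2" using rep_adj[OF rep W False] w(3,4) by blast
  then have "w2 \<in> component_of W E w1"
    using component_edge_closed[OF component_of_self[OF W(1)] W(2)] by blast
  then have "w2 \<in> K1" using component_eq_of_mem[OF sym K(1) w(1)] by simp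
  then show ?thesis using components_eqI[OF sym K] w(2) by blast
qed

text \<open>If every local component at z is adjacent to z, at most two of them contain an interval
  that is not nested inside the interval of z: one crossing each endpoint of I_z.\<close>

lemma few_components_leave_interval:
  assumes fin: "finite W" and sym: "symp E" and rep: "interval_rep W E I" and z: "z \<in> W"
    and nb: "\<forall>K\<in>components (W - {z}) E. \<exists>v\<in>K. E z v"
  shows "card {K \<in> components (W - {z}) E. \<exists>v\<in>K. \<not> ival I v \<subseteq> ival I z} \<le> 2"
proof -
  define crossing where
    "crossing a = {K \<in> components (W - {z}) E. \<exists>w\<in>K. a \<in> ival I w}" for a
  have rep': "interval_rep (W - {z}) E I" using rep_restrict[OF rep] by blast
  have fin_comps: "finite (components (W - {z}) E)"
    unfolding components_eq_image using fin by simp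
  have crossing_le: "card (crossing a) \<le> 1" for a
  proof -
    have "finite (crossing a)" using fin_comps unfolding crossing_def by simp
    moreover have "\<forall>K1\<in>crossing a. \<forall>K2\<in>crossing a. K1 = K2"
      unfolding crossing_def using component_covering_point_unique[OF sym rep'] by blast
    ultimately show ?thesis using card_le_Suc0_iff_eq by (metis One_nat_def)
  qed
  have "{K \<in> components (W - {z}) E. \<exists>v\<in>K. \<not> ival I v \<subseteq> ival I z}
          \<subseteq> crossing (fst (I z)) \<union> crossing (snd (I z))"
  proof
    fix K assume "K \<in> {K \<in> components (W - {z}) E. \<exists>v\<in>K. \<not> ival I v \<subseteq> ival I z}"
    then obtain v where K: "K \<in> components (W - {z}) E" and vK: "v \<in> K"
      and out: "\<not> ival I v \<subseteq> ival I z" by blast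
    obtain u where u: "u \<in> K" "E z u" using nb K by blast
    have V: "v \<in> W - {z}" "u \<in> W - {z}" using vK u(1) components_subset[OF K] by blast+
    have zu: "fst (I z) \<le> snd (I u)" "fst (I u) \<le> snd (I z)"
      using rep_adj[OF rep z, of u] V u(2) unfolding ival_def by auto
    have Kv: "K = component_of (W - {z}) E v" and Ku: "K = component_of (W - {z}) E u"
      using component_eq_of_mem[OF sym K] vK u(1) by auto
    have vu: "reach (W - {z}) E v u" and uv: "reach (W - {z}) E u v"
      using Kv Ku vK u(1) unfolding component_of_def by auto
    have "fst (I v) < fst (I z) \<or> snd (I z) < snd (I v)"
      using out rep_fst_le_snd[OF rep, of v] V unfolding ival_def by auto
    then show "K \<in> crossing (fst (I z)) \<union> crossing (snd (I z))"
    proof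
      assume "fst (I v) < fst (I z)"
      then have "K \<in> crossing (fst (I z))"
        using reach_covers_point[OF rep' V(1) vu _ zu(1)] K Kv unfolding crossing_def by auto
      then show ?thesis by blast
    next
      assume "snd (I z) < snd (I v)"
      then have "K \<in> crossing (snd (I z))"
        using reach_covers_point[OF rep' V(2) uv zu(2)] K Ku unfolding crossing_def by auto
      then show ?thesis by blast
    qed
  qed
  then have "card {K \<in> components (W - {z}) E. \<exists>v\<in>K. \<not> ival I v \<subseteq> ival I z}
               \<le> card (crossing (fst (I z)) \<union> crossing (snd (I z)))"
    by (rule card_mono[rotated]) (use fin_comps in \<open>simp add: crossing_def\<close>)
  also have "\<dots> \<le> card (crossing (fst (I z))) + card (crossing (snd (I z)))"
    by (rule card_Un_le)
  finally show ?thesis using crossing_le[of "fst (I z)"] crossing_le[of "snd (I z)"] by simp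
qed

lemma nested_component_not_exterior:
  assumes rep: "interval_rep W E I" and z: "z \<in> W" and K: "K \<subseteq> W - {z}"
    and nested: "\<forall>v\<in>K. ival I v \<subseteq> ival I z"
  shows "\<not> exterior E z K"
proof -
  have "E z v" if v: "v \<in> K" for v
  proof -
    have "fst (I v) \<in> ival I v" using rep_fst_le_snd[OF rep] v K unfolding ival_def by auto
    then have "ival I z \<inter> ival I v \<noteq> {}" using nested v by blast
    then show ?thesis using rep_adj[OF rep z, of v] v K by auto
  qed
  then show ?thesis unfolding exterior_def by blast
qed

lemma wt_at_le_imp_at:
  assumes fin: "finite W" and sym: "symp E" and rep: "interval_rep W E I" and z: "z \<in> W"
    and nb: "\<forall>K\<in>components (W - {z}) E. \<exists>v\<in>K. E z v"
  shows "wt_at W E z \<le> imp_at W I z"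
proof -
  define LC where "LC = components (W - {z}) E"
  define NE where "NE = {K \<in> LC. \<not> exterior E z K}"
  define Ins where "Ins = {K \<in> LC. \<forall>v\<in>K. ival I v \<subseteq> ival I z}"
  have finLC: "finite LC" unfolding LC_def components_eq_image using fin by simp
  have LC_sub: "K \<subseteq> W - {z}" if "K \<in> LC" for K
    using components_subset[of K "W - {z}" E] that unfolding LC_def by blast
  have Ins_NE: "Ins \<subseteq> NE"
  proof
    fix K assume "K \<in> Ins"
    then have "K \<in> LC" "\<forall>v\<in>K. ival I v \<subseteq> ival I z" unfolding Ins_def by blast+
    then show "K \<in> NE"
      using nested_component_not_exterior[OF rep z LC_sub] unfolding NE_def by blast
  qed
  have "LC - Ins = {K \<in> LC. \<exists>v\<in>K. \<not> ival I v \<subseteq> ival I z}" unfolding Ins_def by blast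
  then have "card (LC - Ins) \<le> 2"
    using few_components_leave_interval[OF fin sym rep z nb] unfolding LC_def by simp
  then have few: "card LC - 2 \<le> card Ins"
    using card_Diff_subset[of Ins LC] finite_subset[of Ins LC] finLC unfolding Ins_def by force
  have "wt_at W E z
          = sum_list (take (card LC - 2) (sorted_list_of_multiset (image_mset card (mset_set NE))))"
    unfolding wt_at_def local_components_def LC_def NE_def Let_def by simp
  also have "\<dots> \<le> sum_mset (image_mset card (mset_set Ins))"
  proof (rule sum_take_sorted_le)
    show "image_mset card (mset_set Ins) \<subseteq># mset (sorted_list_of_multiset (image_mset card (mset_set NE)))"
      using Ins_NE finLC by (simp add: image_mset_subseteq_mono subset_imp_msubset_mset_set NE_def)
  qed (use few in simp_all)
  also have "\<dots> = card (\<Union>Ins)"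
  proof -
    have "disjnt K1 K2" if "K1 \<in> Ins" "K2 \<in> Ins" "K1 \<noteq> K2" for K1 K2
      using components_eqI[OF sym, of K1 "W - {z}" K2] that unfolding disjnt_def Ins_def LC_def by blast
    then have "pairwise disjnt Ins" unfolding pairwise_def by blast
    moreover have "finite K" if "K \<in> Ins" for K
      using that LC_sub[of K] fin unfolding Ins_def by (blast intro: finite_subset)
    ultimately show ?thesis by (simp add: sum_unfold_sum_mset[symmetric] card_Union_disjoint)
  qed
  also have "\<dots> \<le> imp_at W I z"
  proof -
    have "\<Union>Ins \<subseteq> {w \<in> W. w \<noteq> z \<and> {fst (I w)..snd (I w)} \<subseteq> {fst (I z)..snd (I z)}}"
      using LC_sub unfolding Ins_def ival_def by blast
    then show ?thesis unfolding imp_at_def by (rule card_mono[rotated]) (simp add: fin)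
  qed
  finally show ?thesis .
qed

lemma wt_at_le_impropriety:
  assumes fin: "finite W" and sym: "symp E" and rep: "interval_rep W E I" and z: "z \<in> W"
    and conn: "\<forall>v\<in>W. reach W E v z"
  shows "wt_at W E z \<le> impropriety W E"
proof -
  obtain I0 where I0: "interval_rep W E I0" "imp_rep W I0 = impropriety W E"
    using LeastI_ex[of "\<lambda>k. \<exists>I. interval_rep W E I \<and> imp_rep W I = k"] rep
    unfolding impropriety_def by blast
  have "wt_at W E z \<le> imp_at W I0 z"
    using wt_at_le_imp_at[OF fin sym I0(1) z] component_has_neighbour[OF sym conn] by blast
  also have "\<dots> \<le> imp_rep W I0" unfolding imp_rep_def using fin z by (intro Max_ge) auto
  finally show ?thesis using I0(2) by simp
qed


text \<open>Replacing one exterior local component by another exterior one does not change the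
  weight: the number of local components and the non-exterior ones are the same.\<close>

lemma wt_at_replace_component:
  assumes fin: "finite V"
    and LC': "local_components V' E z = insert C' (local_components V E z - {C})"
    and C: "C \<in> local_components V E z" "C' \<notin> local_components V E z - {C}"
    and ext: "exterior E z C" "exterior E z C'"
  shows "wt_at V' E z = wt_at V E z"
proof -
  have fin_LC: "finite (local_components V E z)"
    unfolding local_components_def components_eq_image using fin by simp
  have "card (local_components V' E z) = Suc (card (local_components V E z - {C}))"
    unfolding LC' using C(2) fin_LC by simp
  also have "\<dots> = card (local_components V E z)" using card_Suc_Diff1[OF fin_LC C(1)] .
  finally have "card (local_components V' E z) = card (local_components V E z)" .
  moreover have "{K \<in> local_components V' E z. \<not> exterior E z K}
                   = {K \<in> local_components V E z. \<not> exterior E z K}"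
    unfolding LC' using ext by auto
  ultimately show ?thesis unfolding wt_at_def Let_def by simp
qed

lemma wt_at_pos_card: "1 \<le> wt_at V E z \<Longrightarrow> 3 \<le> card (local_components V E z)"
  unfolding wt_at_def Let_def by (rule ccontr) simp

text \<open>Deleting a local component A at z1 that avoids z2 leaves the weight of z2 unchanged,
  provided another local component B at z1 also avoids z2 (it keeps the component of z1
  in G - z2 exterior).\<close>

lemma wt_at_delete_component:
  assumes fin: "finite V" and sym: "symp E" and conn: "\<forall>v\<in>V. reach V E v z1"
    and z1: "z1 \<in> V" and z2: "z2 \<in> V - {z1}"
    and A: "A \<in> local_components V E z1" "z2 \<notin> A"
    and B: "B \<in> local_components V E z1" "z2 \<notin> B" "A \<noteq> B"
  shows "wt_at (V - A) E z2 = wt_at V E z2"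
proof -
  define C where "C = component_of (V - {z2}) E z1"
  have z1': "z1 \<in> V - {z2}" using z1 z2 by blast
  have comps_z1: "K \<in> components (V - {z1}) E" if "K \<in> local_components V E z1" for K
    using that unfolding local_components_def .
  have in_C: "K \<subseteq> C" if K: "K \<in> local_components V E z1" "z2 \<notin> K" for K
  proof -
    obtain u where u: "u \<in> K" "E z1 u"
      using component_has_neighbour[OF sym conn comps_z1[OF K(1)]] by blast
    have "K \<subseteq> V - {z2}" using components_subset[OF comps_z1[OF K(1)]] K(2) by blast
    moreover have "E u z1" using u(2) sym by (blast dest: sympD)
    ultimately show ?thesis
      unfolding C_def using component_subset_of_neighbour[OF sym comps_z1[OF K(1)] _ z1' u(1)] by blast
  qed
  have "A \<in> components (V - {z1} - {z2}) E"
    using component_delete_vertex[OF comps_z1[OF A(1)] A(2)] .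
  moreover have "V - {z1} - {z2} = V - {z2} - {z1}" by blast
  ultimately have A': "A \<in> components (V - {z2} - {z1}) E" by simp
  have z1A: "z1 \<notin> A" using components_subset[OF comps_z1[OF A(1)]] by blast
  have C_conn: "C - A \<subseteq> component_of (V - {z2} - A) E z1"
  proof
    fix y assume y: "y \<in> C - A"
    then have "reach (V - {z2}) E z1 y" "y \<in> V - {z2}" unfolding C_def component_of_def by auto
    then have "reach (V - {z2} - A) E y z1"
      using reach_avoiding_component[OF sym z1' A'] reach_sym[OF sym] y by blast
    then show "y \<in> component_of (V - {z2} - A) E z1"
      using reach_sym[OF sym] \<open>y \<in> V - {z2}\<close> y unfolding component_of_def by blast
  qed
  have CLC: "C \<in> components (V - {z2}) E" unfolding C_def components_eq_image using z1' by blast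
  have z1C: "z1 \<in> C - A" using component_of_self[OF z1'] z1A unfolding C_def by blast
  note split = components_diff_part[OF sym CLC in_C[OF A] z1C C_conn]
  obtain b where b: "b \<in> B" using components_nonempty[OF comps_z1[OF B(1)]] by blast
  have "\<not> E z2 b"
  proof
    assume "E z2 b"
    moreover have "b \<in> V - {z1}" using b components_subset[OF comps_z1[OF B(1)]] by blast
    ultimately have "b \<in> component_of (V - {z1}) E z2"
      using component_edge_closed[OF component_of_self[OF z2]] by blast
    then have "B = component_of (V - {z1}) E z2"
      using component_eq_of_mem[OF sym comps_z1[OF B(1)] b] component_of_eq[OF sym] by metis
    then show False using B(2) component_of_self[OF z2] by blast
  qed
  moreover have "b \<in> C - A"
    using b in_C[OF B(1,2)] components_eqI[OF sym comps_z1[OF A(1)] comps_z1[OF B(1)]] B(3) by blast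
  ultimately have "exterior E z2 C" "exterior E z2 (C - A)" unfolding exterior_def by blast+
  moreover have "local_components (V - A) E z2 = insert (C - A) (local_components V E z2 - {C})"
    using split(1) unfolding local_components_def by (metis Diff_insert Diff_insert2)
  ultimately show ?thesis
    using wt_at_replace_component[where V'="V - A" and C'="C - A" and C=C and z=z2, OF fin]
      CLC split(2) unfolding local_components_def by blast
qed

lemma positive_weight_at_basepoint:
  assumes fin: "finite V" and sym: "symp E" and rep: "interval_rep V E I"
    and conn: "\<forall>x\<in>V. \<forall>y\<in>V. reach V E x y"
    and crit: "\<forall>V'. V' \<subset> V \<longrightarrow> impropriety V' E < wt_at V E z2"
    and z1: "z1 \<in> V" and z2: "z2 \<in> V" and pos: "1 \<le> wt_at V E z1"
  shows "z1 = z2"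
proof (rule ccontr)
  assume ne: "z1 \<noteq> z2"
  define LC1 where "LC1 = local_components V E z1"
  define D where "D = component_of (V - {z1}) E z2"
  have z2': "z2 \<in> V - {z1}" using z2 ne by blast
  have LC1: "K \<in> components (V - {z1}) E" if "K \<in> LC1" for K
    using that unfolding LC1_def local_components_def .
  have D: "D \<in> LC1" "z2 \<in> D"
    unfolding D_def LC1_def local_components_def components_eq_image
    using component_of_self[OF z2'] z2' by blast+
  have fin_LC1: "finite LC1"
    unfolding LC1_def local_components_def components_eq_image using fin by simp
  then have "\<not> card (LC1 - {D}) \<le> Suc 0" using wt_at_pos_card[OF pos] D(1) unfolding LC1_def by simp
  then obtain A B where AB: "A \<in> LC1 - {D}" "B \<in> LC1 - {D}" "A \<noteq> B"
    using card_le_Suc0_iff_eq[of "LC1 - {D}"] fin_LC1 by blast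
  have avoid: "z2 \<notin> K" if K: "K \<in> LC1 - {D}" for K
  proof
    assume "z2 \<in> K"
    then have "K = D" using components_eqI[OF sym LC1[of K] LC1[of D]] K D by blast
    then show False using K by blast
  qed
  define H where "H = V - A"
  have A_comp: "A \<in> components (V - {z1}) E" using LC1 AB(1) by blast
  have "A \<noteq> {}" "A \<subseteq> V" using components_nonempty[OF A_comp] components_subset[OF A_comp] by auto
  then have "H \<subset> V" unfolding H_def by blast
  then have "impropriety H E < wt_at V E z2" using crit by blast
  also have "wt_at V E z2 = wt_at H E z2"
  proof -
    have "\<forall>v\<in>V. reach V E v z1" using conn z1 by blast
    moreover have "A \<in> LC1" "B \<in> LC1" using AB by blast+
    ultimately show ?thesis unfolding H_def
      using wt_at_delete_component[OF fin sym _ z1 z2' _ avoid[OF AB(1)] _ avoid[OF AB(2)] AB(3)]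
      unfolding LC1_def by simp
  qed
  also have "wt_at H E z2 \<le> impropriety H E"
  proof (rule wt_at_le_impropriety)
    have to_z1: "reach H E v z1" if v: "v \<in> H" for v
    proof -
      have "reach V E v z1" using conn z1 v unfolding H_def by blast
      then show ?thesis using reach_avoiding_component[OF sym z1 A_comp, of v] v unfolding H_def by blast
    qed
    have z2H: "z2 \<in> H" unfolding H_def using z2 avoid[OF AB(1)] by blast
    have "reach H E z1 z2" using reach_sym[OF sym to_z1[OF z2H]] .
    then show "\<forall>v\<in>H. reach H E v z2" using reach_trans[OF to_z1] by blast
    show "finite H" "interval_rep H E I" "z2 \<in> H"
      using fin rep_restrict[OF rep] z2H unfolding H_def by auto
  qed (rule sym)
  finally show False by simp
qed

lemma wt_attained:
  assumes "finite V" "0 < wt V E"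
  shows "\<exists>z\<in>V. wt_at V E z = wt V E"
proof -
  have "wt V E \<in> insert 0 (wt_at V E ` V)"
    unfolding wt_def by (rule Max_in) (simp_all add: assms(1))
  then show ?thesis using assms(2) by auto
qed

theorem theorem3p2:
  fixes V :: "'a set" and E :: "'a \<Rightarrow> 'a \<Rightarrow> bool" and p :: nat
  assumes "interval_graph V E"
    and "connected_graph V E"
    and "balanced V E"
    and "p \<ge> 1"
    and "critical p V E"
  shows "\<exists>!z. basepoint V E z"
proof -
  obtain I where rep: "interval_rep V E I" and sg: "simple_graph V E"
    using assms(1) unfolding interval_graph_def by blast
  have fin: "finite V" and sym: "symp E" using sg unfolding simple_graph_def symp_def by blast+
  have conn: "\<forall>x\<in>V. \<forall>y\<in>V. reach V E x y" using assms(2) unfolding connected_graph_def by blast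
  have imp: "impropriety V E = p" and crit: "\<forall>V'. V' \<subset> V \<longrightarrow> impropriety V' E < p"
    using assms(5) unfolding critical_def by blast+
  have wt: "wt V E = p" using assms(3) imp unfolding balanced_def by simp
  have basepoint_iff: "basepoint V E z \<longleftrightarrow> z \<in> V \<and> wt_at V E z = p" for z
    using assms(3) imp unfolding basepoint_def by auto
  obtain z where z: "z \<in> V" "wt_at V E z = p"
    using wt_attained[OF fin, of E] wt assms(4) by auto
  show ?thesis
  proof (rule ex1I[of _ z])
    show "basepoint V E z" using z basepoint_iff by blast
    show "y = z" if "basepoint V E y" for y
    proof (rule positive_weight_at_basepoint[OF fin sym rep conn])
      show "\<forall>V'. V' \<subset> V \<longrightarrow> impropriety V' E < wt_at V E z" using crit z(2) by simp
      show "y \<in> V" "1 \<le> wt_at V E y" using that assms(4) unfolding basepoint_iff by auto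
    qed (rule z(1))
  qed
qed

end
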